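(* Let $F:\mathcal{H}\to\mathbb{R}$ be differentiable with $L$-Lipschitz gradient, $\arg\min F\ne\emptyset$, satisfying (PL) with $\mu>0$, and let $x(\cdot)$ be the solution of the heavy ball system with damping $\alpha>0$ and initial point $x_0$. Let $a,\delta\ge0$, $R:=\alpha-a+\delta$, and assume $R>0$, $aR\le2\mu$ and $L-\alpha\delta+\frac\delta2R\le0$. Then for all $t>0$, $$F(x(t))-F_*\le C(t)e^{-mt},\qquad m=\min\{a,R\},$$ where $C(t)=(F(x_0)-F_* )\big(1+\frac{a}{|a-R|}\big)$ if $a\ne R$, and $C(t)=(F(x_0)-F_* )(1+at)$ if $a=R$.
   Context: (PL) with constant $\mu>0$: $F(x)-F_*\le \frac{1}{2\mu}\|\nabla F(x)\|^2$ for all $x$, where $F_*=\min F$. Heavy ball system: $\ddot x(t)+\alpha\dot x(t)+\nabla F(x(t))=0$, $x(0)=x_0$, $\dot x(0)=0$ (unique $C^2$ global solution). *)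

theory Defs
  imports "HOL-Analysis.Analysis"
begin

end

theory Submission
  imports Defs
begin

(* With R = \<alpha> - a + \<delta>, the function
     E = a (F x - F\<^sub>\<star>) + \<delta>/2 |x'|\<^sup>2 + <\<nabla>F x, x'>
   satisfies E' + R E \<le> 0, by (PL) and the condition on L; since \<nabla>F is only Lipschitz, E need
   not be differentiable and the inequality is established for the upper right Dini derivative.
   Hence E t \<le> exp (- R t) E 0 = a (F x0 - F\<^sub>\<star>) exp (- R t). As \<delta> \<ge> 0, f = F x - F\<^sub>\<star> satisfies
   f' + a f \<le> E, and this linear differential inequality integrates to the claimed bound. *)

lemma right_Dini_nonpos_imp_decreasing:
  fixes \<phi> :: "real \<Rightarrow> real"
  assumes ab: "a \<le> b" and cont: "continuous_on {a..b} \<phi>"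
    and Dini: "\<And>s \<epsilon>. s \<in> {a..<b} \<Longrightarrow> \<epsilon> > 0 \<Longrightarrow>
      eventually (\<lambda>u. \<phi> u \<le> \<phi> s + \<epsilon> * (u - s)) (at_right s)"
  shows "\<phi> b \<le> \<phi> a"
proof -
  have slope: "\<phi> b \<le> \<phi> a + \<epsilon> * (b - a)" if \<epsilon>: "\<epsilon> > 0" for \<epsilon>
  proof (rule ccontr)
    assume neg: "\<not> ?thesis"
    define S where "S = {u \<in> {a..b}. \<phi> u \<le> \<phi> a + \<epsilon> * (u - a)}"
    have "closed S"
    proof -
      have "continuous_on {a..b} (\<lambda>u. \<phi> u - \<epsilon> * (u - a))"
        by (intro continuous_intros cont)
      then have "closed ({a..b} \<inter> (\<lambda>u. \<phi> u - \<epsilon> * (u - a)) -` {..\<phi> a})"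
        by (rule continuous_closed_preimage) auto
      then show ?thesis
        by (rule back_subst) (auto simp: S_def algebra_simps)
    qed
    moreover have "a \<in> S" "bdd_above S"
      using ab by (auto simp: S_def intro: bdd_aboveI[of _ b])
    ultimately have cS: "Sup S \<in> S"
      by (intro closed_contains_Sup) auto
    with neg have c_lt_b: "Sup S < b"
      by (cases "Sup S = b") (auto simp: S_def)
    with cS have "eventually (\<lambda>u. u < b \<and> Sup S < u \<and> \<phi> u \<le> \<phi> (Sup S) + \<epsilon> * (u - Sup S))
        (at_right (Sup S))"
      by (intro eventually_conj eventually_at_right_less Dini \<epsilon>)
        (use c_lt_b eventually_at_right[OF c_lt_b] in \<open>auto simp: S_def\<close>)
    then obtain u where u: "u < b" "Sup S < u" "\<phi> u \<le> \<phi> (Sup S) + \<epsilon> * (u - Sup S)"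
      using eventually_happens[of _ "at_right (Sup S)"] by auto
    with cS have "u \<in> S"
      by (auto simp: S_def algebra_simps)
    then have "u \<le> Sup S"
      by (rule cSup_upper) fact
    with u show False by simp
  qed
  show ?thesis
  proof (rule field_le_epsilon)
    fix e :: real assume "e > 0"
    with ab have "\<phi> b \<le> \<phi> a + e / (b - a + 1) * (b - a)"
      by (intro slope) auto
    also have "e / (b - a + 1) * (b - a) \<le> e"
      using ab \<open>e > 0\<close> by (simp add: field_simps)
    finally show "\<phi> b \<le> \<phi> a + e" by simp
  qed
qed

lemma eventually_le_linear_if_quotient_tendsto:
  fixes \<phi> q :: "real \<Rightarrow> real"
  assumes bound: "eventually (\<lambda>u. \<phi> u - \<phi> s \<le> (u - s) * q u) (at_right s)"
    and q: "(q \<longlongrightarrow> Q) (at_right s)" and "Q < \<epsilon>"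
  shows "eventually (\<lambda>u. \<phi> u \<le> \<phi> s + \<epsilon> * (u - s)) (at_right s)"
proof -
  have "eventually (\<lambda>u. q u < \<epsilon>) (at_right s)"
    using q \<open>Q < \<epsilon>\<close> by (rule order_tendstoD)
  with bound eventually_at_right_less[of s] show ?thesis
  proof eventually_elim
    case (elim u)
    then have "(u - s) * q u \<le> (u - s) * \<epsilon>" by simp
    with elim show ?case by (simp add: algebra_simps)
  qed
qed

lemma tendsto_norm_diff_quotient_at_right:
  fixes x :: "real \<Rightarrow> 'a::real_normed_vector"
  assumes "(x has_vector_derivative w) (at_right s)"
  shows "((\<lambda>u. norm (x u - x s) / (u - s)) \<longlongrightarrow> norm w) (at_right s)"
proof -
  have remainder: "((\<lambda>u. norm (x u - x s - (u - s) *\<^sub>R w) / norm (u - s)) \<longlongrightarrow> 0) (at_right s)"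
    using assms unfolding has_vector_derivative_def has_derivative_iff_norm by auto
  have "((\<lambda>u. norm (x u - x s) / (u - s) - norm w) \<longlongrightarrow> 0) (at_right s)"
  proof (rule Lim_null_comparison[OF _ remainder])
    show "eventually (\<lambda>u. norm (norm (x u - x s) / (u - s) - norm w) \<le>
        norm (x u - x s - (u - s) *\<^sub>R w) / norm (u - s)) (at_right s)"
      using eventually_at_right_less[of s]
    proof eventually_elim
      case (elim u)
      then have "norm (x u - x s) / (u - s) - norm w =
          (norm (x u - x s) - norm ((u - s) *\<^sub>R w)) / (u - s)"
        by (simp add: diff_divide_distrib)
      with elim norm_triangle_ineq3[of "x u - x s" "(u - s) *\<^sub>R w"] show ?case
        by (simp add: divide_right_mono)
    qed
  qed
  then show ?thesis
    using Lim_null by blast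
qed

lemma heavy_ball_rate_inequality:
  fixes g w :: "'a::real_inner"
  assumes PL: "a * R * f \<le> g \<bullet> g" and R: "R = \<alpha> - a + \<delta>"
    and cond: "L - \<alpha> * \<delta> + \<delta> / 2 * R \<le> 0"
  shows "R * (a * f + \<delta> / 2 * (w \<bullet> w) + g \<bullet> w)
      + (a * (g \<bullet> w) + \<delta> * (w \<bullet> (- \<alpha> *\<^sub>R w - g)) + g \<bullet> (- \<alpha> *\<^sub>R w - g))
      + L * (w \<bullet> w) \<le> 0"
proof -
  have "R * (a * f + \<delta> / 2 * (w \<bullet> w) + g \<bullet> w)
      + (a * (g \<bullet> w) + \<delta> * (w \<bullet> (- \<alpha> *\<^sub>R w - g)) + g \<bullet> (- \<alpha> *\<^sub>R w - g))
      + L * (w \<bullet> w) = (a * R * f - g \<bullet> g) + (L - \<alpha> * \<delta> + \<delta> / 2 * R) * (w \<bullet> w)"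
    unfolding R by (simp add: inner_diff_right inner_commute algebra_simps)
  also have "\<dots> \<le> 0"
    using PL mult_nonpos_nonneg[OF cond inner_ge_zero[of w]] by linarith
  finally show ?thesis .
qed

(* exp_convolution a R t = \<integral>\<^sub>0\<^sup>t exp (- a * (t - s)) * exp (- R * s) ds *)
definition exp_convolution :: "real \<Rightarrow> real \<Rightarrow> real \<Rightarrow> real" where
  "exp_convolution a R t =
    (if a = R then t * exp (- a * t) else (exp (- R * t) - exp (- a * t)) / (a - R))"

lemma exp_convolution_0 [simp]: "exp_convolution a R 0 = 0"
  by (simp add: exp_convolution_def)

lemma exp_convolution_has_real_derivative:
  "(exp_convolution a R has_real_derivative exp (- R * t) - a * exp_convolution a R t)
    (at t within S)"
proof (cases "a = R")
  case True
  then show ?thesis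
    unfolding exp_convolution_def
    by (auto intro!: derivative_eq_intros simp: algebra_simps)
next
  case False
  then have "((\<lambda>t. (exp (- R * t) - exp (- a * t)) / (a - R)) has_real_derivative
      (exp (- R * t) * - R - exp (- a * t) * - a) / (a - R)) (at t within S)"
    by (auto intro!: derivative_eq_intros)
  moreover have "(exp (- R * t) * - R - exp (- a * t) * - a) / (a - R) =
      exp (- R * t) - a * ((exp (- R * t) - exp (- a * t)) / (a - R))"
    using False by (simp add: field_simps)
  ultimately show ?thesis
    using False unfolding exp_convolution_def by simp
qed

lemma exp_convolution_le:
  assumes "t \<ge> 0" and "a \<noteq> R"
  shows "exp_convolution a R t \<le> exp (- min a R * t) / \<bar>a - R\<bar>"
proof -
  have "exp (- a * t) \<le> exp (- min a R * t)" "exp (- R * t) \<le> exp (- min a R * t)"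
    using \<open>t \<ge> 0\<close> by (simp_all add: mult_right_mono)
  then have "\<bar>exp (- R * t) - exp (- a * t)\<bar> \<le> exp (- min a R * t)"
    using exp_gt_zero[of "- R * t"] exp_gt_zero[of "- a * t"] by linarith
  then have "\<bar>exp_convolution a R t\<bar> \<le> exp (- min a R * t) / \<bar>a - R\<bar>"
    using \<open>a \<noteq> R\<close> by (simp add: exp_convolution_def abs_divide divide_right_mono)
  then show ?thesis by simp
qed

lemma exp_convolution_combination_le:
  assumes "f0 \<ge> 0" and "a \<ge> 0" and "t \<ge> 0"
  shows "exp (- a * t) * f0 + a * f0 * exp_convolution a R t \<le>
    (if a \<noteq> R then f0 * (1 + a / \<bar>a - R\<bar>) else f0 * (1 + a * t)) * exp (- min a R * t)"
proof (cases "a = R")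
  case False
  have "exp (- a * t) * f0 \<le> exp (- min a R * t) * f0"
    using assms by (intro mult_right_mono) (simp_all add: mult_right_mono)
  moreover have "a * f0 * exp_convolution a R t \<le> a * f0 * (exp (- min a R * t) / \<bar>a - R\<bar>)"
    using assms False by (intro mult_left_mono exp_convolution_le) auto
  ultimately show ?thesis
    using False by (simp add: algebra_simps)
qed (simp add: exp_convolution_def algebra_simps)

lemma linear_differential_inequality:
  fixes f f' :: "real \<Rightarrow> real"
  assumes deriv: "\<And>s. s \<ge> 0 \<Longrightarrow> (f has_real_derivative f' s) (at s within {0..})"
    and ineq: "\<And>s. s \<ge> 0 \<Longrightarrow> f' s + a * f s \<le> b * exp (- R * s)"
    and "t \<ge> 0"
  shows "f t \<le> exp (- a * t) * f 0 + b * exp_convolution a R t"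
proof -
  define \<phi> where "\<phi> u = exp (a * u) * (f u - b * exp_convolution a R u)" for u
  have \<phi>_deriv: "(\<phi> has_real_derivative exp (a * u) * (f' u + a * f u - b * exp (- R * u)))
      (at u within {0..})" if "u \<ge> 0" for u
    unfolding \<phi>_def
    by (rule derivative_eq_intros deriv[OF that] exp_convolution_has_real_derivative refl)+
      (simp add: algebra_simps)
  have "\<phi> t \<le> \<phi> 0"
  proof (rule DERIV_nonpos_imp_decreasing_open[OF \<open>t \<ge> 0\<close>])
    fix u :: real assume "0 < u" "u < t"
    then have "at u within {0..} = at u"
      by (intro at_within_open_subset[of _ "{0<..}"]) auto
    then show "\<exists>y. (\<phi> has_real_derivative y) (at u) \<and> y \<le> 0"
      using \<phi>_deriv[of u] ineq[of u] \<open>0 < u\<close> by (auto intro!: mult_nonneg_nonpos)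
  next
    show "continuous_on {0..t} \<phi>"
      unfolding continuous_on_eq_continuous_within
      by (auto intro: continuous_within_subset[OF DERIV_continuous[OF \<phi>_deriv]])
  qed
  also have "\<phi> 0 = f 0"
    by (simp add: \<phi>_def)
  finally have "exp (- a * t) * \<phi> t \<le> exp (- a * t) * f 0"
    by (rule mult_left_mono) simp
  moreover have "exp (- a * t) * \<phi> t = f t - b * exp_convolution a R t"
    by (simp add: \<phi>_def mult.assoc[symmetric] exp_add[symmetric])
  ultimately show ?thesis
    by linarith
qed

locale heavy_ball =
  fixes F :: "'a::real_inner \<Rightarrow> real" and gradF :: "'a \<Rightarrow> 'a"
    and x v :: "real \<Rightarrow> 'a" and \<alpha> L :: real
  assumes F_has_derivative: "\<And>y. (F has_derivative (\<lambda>h. gradF y \<bullet> h)) (at y)"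
    and gradF_Lipschitz: "\<And>y z. norm (gradF y - gradF z) \<le> L * norm (y - z)"
    and x_has_derivative: "\<And>s. s \<ge> 0 \<Longrightarrow> (x has_vector_derivative v s) (at s within {0..})"
    and v_has_derivative: "\<And>s. s \<ge> 0 \<Longrightarrow>
      (v has_vector_derivative (- \<alpha> *\<^sub>R v s - gradF (x s))) (at s within {0..})"
begin

lemma continuous_on_gradF: "continuous_on UNIV gradF"
proof (rule continuous_at_imp_continuous_on, intro ballI)
  fix y
  have "((\<lambda>z. gradF z - gradF y) \<longlongrightarrow> 0) (at y)"
  proof (rule Lim_null_comparison)
    show "eventually (\<lambda>z. norm (gradF z - gradF y) \<le> L * norm (z - y)) (at y)"
      using gradF_Lipschitz by auto
  qed (auto intro!: tendsto_eq_intros)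
  then show "isCont gradF y"
    unfolding isCont_def by (simp add: LIM_zero_iff)
qed

lemma continuous_on_x: "continuous_on {0..} x"
  using has_vector_derivative_continuous[OF x_has_derivative]
  by (auto simp: continuous_on_eq_continuous_within)

lemma continuous_on_v: "continuous_on {0..} v"
  using has_vector_derivative_continuous[OF v_has_derivative]
  by (auto simp: continuous_on_eq_continuous_within)

lemma F_x_has_real_derivative:
  assumes "s \<ge> 0"
  shows "((\<lambda>u. F (x u)) has_real_derivative gradF (x s) \<bullet> v s) (at s within {0..})"
  using has_derivative_compose[OF x_has_derivative[OF assms, unfolded has_vector_derivative_def]
      F_has_derivative]
  by (simp add: has_field_derivative_def mult.commute[of _ "gradF (x s) \<bullet> v s"])

definition lyapunov :: "real \<Rightarrow> real \<Rightarrow> real \<Rightarrow> real \<Rightarrow> real" where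
  "lyapunov c a \<delta> u = a * (F (x u) - c) + \<delta> / 2 * (v u \<bullet> v u) + gradF (x u) \<bullet> v u"

lemma lyapunov_right_Dini:
  assumes PL: "\<And>y. a * R * (F y - c) \<le> gradF y \<bullet> gradF y"
    and R: "R = \<alpha> - a + \<delta>" and cond: "L - \<alpha> * \<delta> + \<delta> / 2 * R \<le> 0"
    and s: "s \<ge> 0" and \<epsilon>: "\<epsilon> > 0"
  shows "eventually (\<lambda>u. exp (R * u) * lyapunov c a \<delta> u
      \<le> exp (R * s) * lyapunov c a \<delta> s + \<epsilon> * (u - s)) (at_right s)"
proof -
  define G where "G = gradF (x s)"
  define v' where "v' = - \<alpha> *\<^sub>R v s - G"
  (* Freezing the gradient at x s makes \<rho> differentiable; the Lipschitz bound on gradF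
     controls the error made by freezing. *)
  define \<rho> where "\<rho> u = exp (R * u) * (a * (F (x u) - c) + \<delta> / 2 * (v u \<bullet> v u) + G \<bullet> v u)" for u
  define D\<rho> where "D\<rho> = exp (R * s) * (R * (a * (F (x s) - c) + \<delta> / 2 * (v s \<bullet> v s) + G \<bullet> v s)
      + (a * (G \<bullet> v s) + \<delta> * (v s \<bullet> v') + G \<bullet> v'))"
  have v_deriv: "(v has_derivative (\<lambda>h. h *\<^sub>R v')) (at s within {0..})"
    using v_has_derivative[OF s] by (simp add: has_vector_derivative_def v'_def G_def)
  have "((\<lambda>u. v u \<bullet> v u) has_real_derivative 2 * (v s \<bullet> v')) (at s within {0..})"
    unfolding has_field_derivative_def
    by (rule has_derivative_eq_rhs[OF has_derivative_inner[OF v_deriv v_deriv]])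
      (auto simp: fun_eq_iff inner_commute algebra_simps)
  moreover have "((\<lambda>u. G \<bullet> v u) has_real_derivative G \<bullet> v') (at s within {0..})"
    unfolding has_field_derivative_def
    by (rule has_derivative_eq_rhs[OF has_derivative_inner[OF has_derivative_const v_deriv]])
      (auto simp: fun_eq_iff algebra_simps)
  ultimately have \<rho>_deriv: "(\<rho> has_real_derivative D\<rho>) (at s within {0..})"
    unfolding \<rho>_def D\<rho>_def
    by (auto intro!: derivative_eq_intros F_x_has_real_derivative[OF s] simp: G_def algebra_simps)
  have "D\<rho> + L * exp (R * s) * norm (v s) * norm (v s) =
      exp (R * s) * (R * (a * (F (x s) - c) + \<delta> / 2 * (v s \<bullet> v s) + G \<bullet> v s)
      + (a * (G \<bullet> v s) + \<delta> * (v s \<bullet> (- \<alpha> *\<^sub>R v s - G)) + G \<bullet> (- \<alpha> *\<^sub>R v s - G))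
      + L * (v s \<bullet> v s))"
    by (simp add: D\<rho>_def v'_def algebra_simps flip: power2_norm_eq_inner power2_eq_square)
  also have "\<dots> \<le> 0"
    using heavy_ball_rate_inequality[OF PL R cond] by (simp add: G_def mult_nonneg_nonpos)
  finally have D\<rho>_bound: "D\<rho> + L * exp (R * s) * norm (v s) * norm (v s) \<le> 0" .
  define q where "q u = (\<rho> u - \<rho> s) / (u - s) + L * exp (R * u) * norm (v u) * (norm (x u - x s) / (u - s))" for u
  have right_within: "at_right s \<le> at s within {0..}"
    using s by (intro at_le) auto
  have "((\<lambda>u. (\<rho> u - \<rho> s) / (u - s)) \<longlongrightarrow> D\<rho>) (at_right s)"
    using \<rho>_deriv right_within unfolding has_field_derivative_iff by (rule tendsto_mono[rotated])
  moreover have "(v \<longlongrightarrow> v s) (at_right s)"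
    using continuous_on_v s right_within
    by (auto simp: continuous_on_eq_continuous_within continuous_within intro: tendsto_mono)
  moreover have "(x has_vector_derivative v s) (at_right s)"
    using s by (intro has_vector_derivative_within_subset[OF x_has_derivative[OF s]]) auto
  ultimately have "(q \<longlongrightarrow> D\<rho> + L * exp (R * s) * norm (v s) * norm (v s)) (at_right s)"
    unfolding q_def by (intro tendsto_intros tendsto_norm_diff_quotient_at_right)
  moreover have "eventually (\<lambda>u. exp (R * u) * lyapunov c a \<delta> u - exp (R * s) * lyapunov c a \<delta> s
      \<le> (u - s) * q u) (at_right s)"
    using eventually_at_right_less[of s]
  proof eventually_elim
    case (elim u)
    have "(gradF (x u) - G) \<bullet> v u \<le> L * norm (x u - x s) * norm (v u)"
      using norm_cauchy_schwarz[of "gradF (x u) - G" "v u"]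
        mult_right_mono[OF gradF_Lipschitz[of "x u" "x s"] norm_ge_zero[of "v u"]]
      by (simp add: G_def)
    then have "exp (R * u) * ((gradF (x u) - G) \<bullet> v u)
        \<le> exp (R * u) * (L * norm (x u - x s) * norm (v u))"
      by (rule mult_left_mono) simp
    then have "exp (R * u) * lyapunov c a \<delta> u - exp (R * s) * lyapunov c a \<delta> s
        \<le> \<rho> u - \<rho> s + exp (R * u) * (L * norm (x u - x s) * norm (v u))"
      by (simp add: lyapunov_def \<rho>_def G_def inner_diff_left algebra_simps)
    also have "\<dots> = (u - s) * q u"
      using elim by (simp add: q_def distrib_left mult_ac)
    finally show ?case .
  qed
  ultimately show ?thesis
    using D\<rho>_bound \<epsilon> by (elim eventually_le_linear_if_quotient_tendsto[rotated]) auto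
qed

lemma lyapunov_decay:
  assumes PL: "\<And>y. a * R * (F y - c) \<le> gradF y \<bullet> gradF y"
    and R: "R = \<alpha> - a + \<delta>" and cond: "L - \<alpha> * \<delta> + \<delta> / 2 * R \<le> 0"
    and "T \<ge> 0"
  shows "lyapunov c a \<delta> T \<le> exp (- R * T) * lyapunov c a \<delta> 0"
proof -
  have F_x: "continuous_on {0..} (\<lambda>u. F (x u))"
    unfolding continuous_on_eq_continuous_within
    by (auto intro: DERIV_continuous F_x_has_real_derivative)
  have gradF_x: "continuous_on {0..} (\<lambda>u. gradF (x u))"
    using continuous_on_compose[OF continuous_on_x continuous_on_subset[OF continuous_on_gradF]]
    by (simp add: o_def)
  have "continuous_on {0..} (\<lambda>u. exp (R * u) * lyapunov c a \<delta> u)"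
    unfolding lyapunov_def by (intro continuous_intros continuous_on_v F_x gradF_x)
  then have "continuous_on {0..T} (\<lambda>u. exp (R * u) * lyapunov c a \<delta> u)"
    by (rule continuous_on_subset) auto
  then have "exp (R * T) * lyapunov c a \<delta> T \<le> exp (R * 0) * lyapunov c a \<delta> 0"
    by (rule right_Dini_nonpos_imp_decreasing[OF \<open>T \<ge> 0\<close>])
      (auto intro!: lyapunov_right_Dini[OF PL R cond])
  then have "exp (R * T) * lyapunov c a \<delta> T \<le> lyapunov c a \<delta> 0"
    by simp
  then have "exp (- R * T) * (exp (R * T) * lyapunov c a \<delta> T) \<le> exp (- R * T) * lyapunov c a \<delta> 0"
    by (rule mult_left_mono) simp
  then show ?thesis
    by (simp add: mult.assoc[symmetric] exp_add[symmetric])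
qed

lemma objective_gap_bound:
  assumes PL: "\<And>y. a * R * (F y - c) \<le> gradF y \<bullet> gradF y"
    and R: "R = \<alpha> - a + \<delta>" and cond: "L - \<alpha> * \<delta> + \<delta> / 2 * R \<le> 0"
    and "\<delta> \<ge> 0" and "v 0 = 0" and "t \<ge> 0"
  shows "F (x t) - c \<le> exp (- a * t) * (F (x 0) - c) + a * (F (x 0) - c) * exp_convolution a R t"
proof (rule linear_differential_inequality[OF _ _ \<open>t \<ge> 0\<close>])
  fix s :: real assume "s \<ge> 0"
  show "((\<lambda>u. F (x u) - c) has_real_derivative gradF (x s) \<bullet> v s) (at s within {0..})"
    using DERIV_diff[OF F_x_has_real_derivative[OF \<open>s \<ge> 0\<close>] DERIV_const[of c]] by simp
  have "gradF (x s) \<bullet> v s + a * (F (x s) - c) \<le> lyapunov c a \<delta> s"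
    using \<open>\<delta> \<ge> 0\<close> by (simp add: lyapunov_def)
  also have "\<dots> \<le> exp (- R * s) * lyapunov c a \<delta> 0"
    using lyapunov_decay[OF PL R cond \<open>s \<ge> 0\<close>] .
  also have "\<dots> = a * (F (x 0) - c) * exp (- R * s)"
    using \<open>v 0 = 0\<close> by (simp add: lyapunov_def)
  finally show "gradF (x s) \<bullet> v s + a * (F (x s) - c) \<le> a * (F (x 0) - c) * exp (- R * s)" .
qed

end

theorem lemma6p3:
  fixes F :: "'a::{real_inner,complete_space} \<Rightarrow> real"
    and gradF :: "'a \<Rightarrow> 'a"
    and x v :: "real \<Rightarrow> 'a"
    and x0 :: 'a
    and L \<mu> \<alpha> a \<delta> t :: real
  assumes grad: "\<And>y. (F has_derivative (\<lambda>h. gradF y \<bullet> h)) (at y)"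
    and lip: "\<And>y z. norm (gradF y - gradF z) \<le> L * norm (y - z)"
    and argmin_ne: "\<exists>xm. \<forall>y. F xm \<le> F y"
    and mu_pos: "\<mu> > 0"
    and PL: "\<And>y. F y - (INF z. F z) \<le> 1 / (2 * \<mu>) * (norm (gradF y))\<^sup>2"
    and alpha_pos: "\<alpha> > 0"
    and x_init: "x 0 = x0"
    and v_init: "v 0 = 0"
    and x_deriv: "\<And>s. s \<ge> 0 \<Longrightarrow> (x has_vector_derivative v s) (at s within {0..})"
    and v_deriv: "\<And>s. s \<ge> 0 \<Longrightarrow>
        (v has_vector_derivative (- \<alpha> *\<^sub>R v s - gradF (x s))) (at s within {0..})"
    and a_nn: "a \<ge> 0" and delta_nn: "\<delta> \<ge> 0"
    and R_pos: "\<alpha> - a + \<delta> > 0"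
    and aR: "a * (\<alpha> - a + \<delta>) \<le> 2 * \<mu>"
    and cond: "L - \<alpha> * \<delta> + \<delta> / 2 * (\<alpha> - a + \<delta>) \<le> 0"
    and t_pos: "t > 0"
  shows "F (x t) - (INF z. F z) \<le>
           (if a \<noteq> \<alpha> - a + \<delta>
            then (F x0 - (INF z. F z)) * (1 + a / \<bar>a - (\<alpha> - a + \<delta>)\<bar>)
            else (F x0 - (INF z. F z)) * (1 + a * t))
           * exp (- min a (\<alpha> - a + \<delta>) * t)"
proof -
  interpret heavy_ball F gradF x v \<alpha> L
    using grad lip x_deriv v_deriv by unfold_locales
  define c where "c = (INF z. F z)"
  define R where "R = \<alpha> - a + \<delta>"
  have gap_nonneg: "F y - c \<ge> 0" for y
  proof -
    obtain xm where "\<And>y. F xm \<le> F y"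
      using argmin_ne by blast
    then have "bdd_below (range F)"
      by (intro bdd_belowI[of _ "F xm"]) auto
    then show ?thesis
      unfolding c_def by (simp add: cINF_lower)
  qed
  have PL_scaled: "a * R * (F y - c) \<le> gradF y \<bullet> gradF y" for y
  proof -
    have "a * R * (F y - c) \<le> 2 * \<mu> * (F y - c)"
      using aR gap_nonneg[of y] unfolding R_def by (rule mult_right_mono)
    also have "\<dots> \<le> (norm (gradF y))\<^sup>2"
      using PL[of y] mu_pos unfolding c_def by (simp add: field_simps)
    finally show ?thesis
      by (simp add: power2_norm_eq_inner)
  qed
  have "F (x t) - c \<le> exp (- a * t) * (F x0 - c) + a * (F x0 - c) * exp_convolution a R t"
    using objective_gap_bound[OF PL_scaled R_def] cond delta_nn v_init t_pos x_init
    by (simp add: R_def)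
  also have "\<dots> \<le> (if a \<noteq> R then (F x0 - c) * (1 + a / \<bar>a - R\<bar>) else (F x0 - c) * (1 + a * t))
      * exp (- min a R * t)"
    using gap_nonneg a_nn t_pos by (intro exp_convolution_combination_le) auto
  finally show ?thesis
    unfolding c_def R_def .
qed

end
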